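(* Consider $n$ agents over a fixed undirected connected graph with symmetric nonnegative weights $a_{ij}$ ($a_{ij}>0$ iff $i,j$ are neighbors). Assume the CFP solution set $\mathbf{X}^*$ is non-empty and there is $K\ge0$ with $\|\nabla g_i^+(x)\|\le K$ for all $x$ and $i$. Let $\{\alpha(t)\},\{\beta(t)\}$ satisfy (a) $\alpha(t)\in[0,1]$, $\sum_t\alpha(t)=\infty$, $\sum_t\alpha^2(t)<\infty$; (b) $\beta(t)\ge0$, $\sum_t\beta(t)=\infty$, $\sum_t\beta^2(t)<\infty$. Let $0<h<\frac{1}{\max_{1\le i\le n}\sum_{j=1}^n a_{ij}}$. The states $x_i(t)\in\mathbb{R}^m$ evolve by $x_i(t+1)=x_i(t)+u_i(t)$ with $$y_i(t)=x_i(t)+h\sum_{j\in N_i}a_{ij}(x_j(t)-x_i(t)),\ \nabla_i(t)=\beta(t)\nabla g_i^+(y_i(t)),\ \xi_i(t)=y_i(t)-\nabla_i(t),$$ $$\varphi_i(t)=\alpha(t)\big(\xi_i(t)-P_{X_i}(\xi_i(t))\big),\ u_i(t)=h\sum_{j\in N_i}a_{ij}(x_j(t)-x_i(t))-\nabla_i(t)-\varphi_i(t).$$ Then the agents reach consensus asymptotically and there is $x^*\in\mathbf{X}^*$ with $\lim_{t\to\infty}x_i(t)=x^*$ for all $i$.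
   Context: For each $i$, $g_i:\mathbb{R}^m\to\mathbb{R}$ convex continuous, $X_i\subset\mathbb{R}^m$ closed convex, $X=\bigcap_iX_i$; the CFP asks for $x$ with $g_i(x)\le0$ for all $i$ and $x\in X$, with solution set $\mathbf{X}^*$. $g_i^+=\max[g_i,0]$; $\nabla g_i^+(y)$ a subgradient of $g_i^+$ at $y$ (chosen as $0$ if $g_i(y)\le0$ and as a subgradient of $g_i$ otherwise); $P_{X_i}$ Euclidean projection onto $X_i$. Consensus means $\|x_i(t)-x_j(t)\|\to0$ for all $i,j$. *)

theory Defs
  imports "HOL-Analysis.Analysis"
begin

definition graph_edges :: "nat \<Rightarrow> (nat \<Rightarrow> nat \<Rightarrow> real) \<Rightarrow> (nat \<times> nat) set" where
  "graph_edges n a = {(i, j). i < n \<and> j < n \<and> a i j > 0}"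

definition connected_graph :: "nat \<Rightarrow> (nat \<Rightarrow> nat \<Rightarrow> real) \<Rightarrow> bool" where
  "connected_graph n a \<longleftrightarrow> (\<forall>i<n. \<forall>j<n. (i, j) \<in> (graph_edges n a)\<^sup>*)"

definition cfp_solutions :: "nat \<Rightarrow> (nat \<Rightarrow> 'a \<Rightarrow> real) \<Rightarrow> (nat \<Rightarrow> 'a set) \<Rightarrow> 'a set" where
  "cfp_solutions n g X = {x. (\<forall>i<n. g i x \<le> 0) \<and> x \<in> (\<Inter>i\<in>{..<n}. X i)}"

text \<open>dgp is a selection of subgradients of g_i^+ = max (g_i) 0 as in the paper:
  0 where g_i(y) \<le> 0, and a subgradient of g_i otherwise.\<close>
definition is_plus_subgrad_selection ::
  "('a::real_inner \<Rightarrow> real) \<Rightarrow> ('a \<Rightarrow> 'a) \<Rightarrow> bool" where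
  "is_plus_subgrad_selection gi dgi \<longleftrightarrow>
     (\<forall>y. (gi y \<le> 0 \<longrightarrow> dgi y = 0) \<and>
          (gi y > 0 \<longrightarrow> (\<forall>z. gi z \<ge> gi y + dgi y \<bullet> (z - y))))"

end

theory Submission
  imports Defs
begin

text \<open>
  For a solution z, the Lyapunov function sq_dist_sum z t = \<Sum>i. norm (x t i - z)^2 satisfies,
  since the consensus matrix I - h L is doubly stochastic and projections and subgradient steps
  do not move points away from the solution set,
    sq_dist_sum z (t+1) \<le> sq_dist_sum z t - disagreement t - 2 subgrad_progress t
                           - proj_progress t + n \<beta>(t)^2 K^2.
  Hence it converges and the three decrease terms are summable. Summability of the
  disagreement gives consensus along every edge, hence everywhere, so all agents follow their
  average. As \<Sum>\<beta> = \<Sum>\<alpha> = \<infinity>, the violation and the infeasibility of the average are each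
  small infinitely often. They are small simultaneously infinitely often because, while both
  are large, the infeasibility changes only by a summable amount and so cannot keep
  oscillating between the two regimes. A limit point of the average along such times solves
  the problem, and since sq_dist_sum at this point converges and tends to 0 along the
  subsequence, every x t i converges to it.
\<close>

section \<open>One-step distance estimates\<close>

lemma sum_weighted_sq_dist:
  fixes v :: "'i \<Rightarrow> 'a::real_inner" and w :: "'i \<Rightarrow> real"
  assumes "sum w I = 1"
  shows "(\<Sum>j\<in>I. w j * (norm (v j - z))\<^sup>2) =
         (norm ((\<Sum>j\<in>I. w j *\<^sub>R v j) - z))\<^sup>2 + (\<Sum>j\<in>I. w j * (norm (v j - (\<Sum>j\<in>I. w j *\<^sub>R v j)))\<^sup>2)"
proof -
  define m where "m = (\<Sum>j\<in>I. w j *\<^sub>R v j)"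
  have split: "(norm (v j - z))\<^sup>2 = (norm (v j - m))\<^sup>2 + 2 * inner (v j - m) (m - z) + (norm (m - z))\<^sup>2" for j
    using dot_norm[of "v j - m" "m - z"] by (simp add: algebra_simps)
  have centred: "(\<Sum>j\<in>I. w j * inner (v j - m) (m - z)) = 0"
  proof -
    have "(\<Sum>j\<in>I. w j * inner (v j - m) (m - z)) = inner (\<Sum>j\<in>I. w j *\<^sub>R (v j - m)) (m - z)"
      by (simp add: inner_sum_left)
    also have "(\<Sum>j\<in>I. w j *\<^sub>R (v j - m)) = m - sum w I *\<^sub>R m"
      by (simp add: scaleR_diff_right sum_subtractf m_def scaleR_sum_left)
    finally show ?thesis
      using assms by simp
  qed
  have "(\<Sum>j\<in>I. w j * (norm (v j - z))\<^sup>2) = (\<Sum>j\<in>I. w j * (norm (v j - m))\<^sup>2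
      + 2 * (w j * inner (v j - m) (m - z)) + w j * (norm (m - z))\<^sup>2)"
    by (rule sum.cong[OF refl]) (simp only: split ring_distribs mult.assoc mult.left_commute)
  also have "\<dots> = (\<Sum>j\<in>I. w j * (norm (v j - m))\<^sup>2)
      + 2 * (\<Sum>j\<in>I. w j * inner (v j - m) (m - z)) + sum w I * (norm (m - z))\<^sup>2"
    by (simp only: sum.distrib sum_distrib_left sum_distrib_right)
  finally have "(\<Sum>j\<in>I. w j * (norm (v j - z))\<^sup>2) = \<dots>" .
  with centred assms show ?thesis
    unfolding m_def by simp
qed

lemma power2_norm_diff_scaleR:
  fixes a b :: "'a::real_inner"
  shows "(norm (a - r *\<^sub>R b))\<^sup>2 = (norm a)\<^sup>2 - 2 * r * (b \<bullet> a) + r\<^sup>2 * (norm b)\<^sup>2"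
  unfolding power2_norm_eq_inner
  by (simp add: inner_diff_left inner_diff_right inner_commute power2_eq_square algebra_simps)

lemma relaxed_projection_sq_dist_le:
  fixes C :: "'a::euclidean_space set"
  assumes "convex C" "closed C" "z \<in> C" "0 \<le> \<theta>" "\<theta> \<le> 1"
  shows "(norm (v - \<theta> *\<^sub>R (v - closest_point C v) - z))\<^sup>2
           \<le> (norm (v - z))\<^sup>2 - \<theta> * (norm (v - closest_point C v))\<^sup>2"
proof -
  define e where "e = v - closest_point C v"
  have "inner e (z - closest_point C v) \<le> 0"
    unfolding e_def using closest_point_dot[OF assms(1-3)] .
  then have obtuse: "(norm e)\<^sup>2 \<le> inner e (v - z)"
    by (simp add: e_def power2_norm_eq_inner inner_diff_right)
  have "(norm (v - \<theta> *\<^sub>R e - z))\<^sup>2 = (norm (v - z))\<^sup>2 - 2 * \<theta> * inner e (v - z) + \<theta>\<^sup>2 * (norm e)\<^sup>2"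
    using power2_norm_diff_scaleR[of "v - z" \<theta> e] by (simp add: algebra_simps)
  also have "\<dots> \<le> (norm (v - z))\<^sup>2 - 2 * \<theta> * (norm e)\<^sup>2 + \<theta> * (norm e)\<^sup>2"
    using obtuse assms(4,5) mult_left_mono[OF obtuse, of "2 * \<theta>"]
      mult_right_mono[of "\<theta>\<^sup>2" \<theta> "(norm e)\<^sup>2"]
    by (simp add: power2_eq_square mult_left_le)
  finally show ?thesis
    unfolding e_def by simp
qed

lemma plus_subgrad_selection_inner_ge:
  assumes "is_plus_subgrad_selection f df" "f z \<le> 0"
  shows "max (f v) 0 \<le> df v \<bullet> (v - z)"
proof (cases "f v \<le> 0")
  case True
  with assms(1) show ?thesis
    unfolding is_plus_subgrad_selection_def by simp
next
  case False
  with assms(1) have "f z \<ge> f v + df v \<bullet> (z - v)"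
    unfolding is_plus_subgrad_selection_def by auto
  with assms(2) False show ?thesis
    by (simp add: inner_diff_right)
qed

lemma plus_subgrad_selection_lipschitz:
  assumes "is_plus_subgrad_selection f df" "\<And>v. norm (df v) \<le> K"
  shows "max (f u) 0 \<le> max (f v) 0 + K * norm (u - v)"
proof (cases "f u \<le> 0")
  case True
  have "0 \<le> K"
    using assms(2) norm_ge_zero order_trans by blast
  with True show ?thesis
    by simp
next
  case False
  with assms(1) have "f v \<ge> f u + df u \<bullet> (v - u)"
    unfolding is_plus_subgrad_selection_def by auto
  moreover have "- (df u \<bullet> (v - u)) \<le> K * norm (u - v)"
    using norm_cauchy_schwarz[of "df u" "u - v"] mult_right_mono[OF assms(2), of "norm (u - v)" u]
    by (simp add: inner_diff_right)
  ultimately show ?thesis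
    using False by simp
qed

lemma subgradient_step_sq_dist_le:
  assumes "is_plus_subgrad_selection f df" "f z \<le> 0" "norm (df v) \<le> K" "0 \<le> \<beta>"
  shows "(norm (v - \<beta> *\<^sub>R df v - z))\<^sup>2 \<le> (norm (v - z))\<^sup>2 - 2 * \<beta> * max (f v) 0 + \<beta>\<^sup>2 * K\<^sup>2"
proof -
  have "(norm (v - \<beta> *\<^sub>R df v - z))\<^sup>2 = (norm (v - z))\<^sup>2 - 2 * \<beta> * (df v \<bullet> (v - z)) + \<beta>\<^sup>2 * (norm (df v))\<^sup>2"
    using power2_norm_diff_scaleR[of "v - z" \<beta> "df v"] by (simp add: algebra_simps)
  also have "\<dots> \<le> (norm (v - z))\<^sup>2 - 2 * \<beta> * max (f v) 0 + \<beta>\<^sup>2 * K\<^sup>2"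
    using mult_left_mono[OF plus_subgrad_selection_inner_ge[OF assms(1,2)], of "2 * \<beta>" v]
      mult_left_mono[OF power_mono[OF assms(3) norm_ge_zero, of 2], of "\<beta>\<^sup>2"] assms(4)
    by simp
  finally show ?thesis .
qed

section \<open>Quasi-Fejer sequences, oscillation and limit points\<close>

lemma quasi_fejer_summable_convergent:
  fixes v u e :: "nat \<Rightarrow> real"
  assumes "\<And>t. 0 \<le> v t" "\<And>t. 0 \<le> u t" "\<And>t. 0 \<le> e t" "summable e"
    and descent: "\<And>t. v (Suc t) \<le> v t - u t + e t"
  shows "summable u" "convergent v"
proof -
  define p where "p t = v t + (\<Sum>s<t. u s) - (\<Sum>s<t. e s)" for t
  have "p (Suc t) \<le> p t" for t
    using descent[of t] by (simp add: p_def)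
  then have "decseq p"
    by (simp add: decseq_Suc_iff)
  have partial_e: "(\<Sum>s<t. e s) \<le> suminf e" for t
    using sum_le_suminf[OF assms(4)] assms(3) by auto
  have "- suminf e \<le> p t" for t
    unfolding p_def using assms(1)[of t] partial_e[of t] sum_nonneg[of "{..<t}" u] assms(2) by force
  then obtain L where "p \<longlonglongrightarrow> L"
    using decseq_convergent[OF \<open>decseq p\<close>] by blast
  have "(\<Sum>s<t. u s) \<le> v 0 + suminf e" for t
    using decseqD[OF \<open>decseq p\<close>, of 0 t] assms(1)[of t] partial_e[of t] by (simp add: p_def)
  then show "summable u"
    by (rule summableI_nonneg_bounded[OF assms(2)])
  then have "(\<lambda>t. p t - (\<Sum>s<t. u s) + (\<Sum>s<t. e s)) \<longlonglongrightarrow> L - suminf u + suminf e"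
    by (intro tendsto_intros \<open>p \<longlonglongrightarrow> L\<close> summable_LIMSEQ assms(4))
  then show "convergent v"
    unfolding p_def convergent_def by auto
qed

lemma rtrancl_tendsto_diff_zero:
  fixes x :: "nat \<Rightarrow> 'i \<Rightarrow> 'a::real_normed_vector"
  assumes "(i, j) \<in> E\<^sup>*" "\<And>k l. (k, l) \<in> E \<Longrightarrow> (\<lambda>t. x t k - x t l) \<longlonglongrightarrow> 0"
  shows "(\<lambda>t. x t i - x t j) \<longlonglongrightarrow> 0"
  using assms(1)
proof (induction rule: rtrancl_induct)
  case (step k l)
  then have "(\<lambda>t. (x t i - x t k) + (x t k - x t l)) \<longlonglongrightarrow> 0 + 0"
    by (intro tendsto_add step.IH assms(2) step.hyps(2))
  then show ?case
    by simp
qed simp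

lemma convergent_if_summable_diff:
  fixes f :: "nat \<Rightarrow> real"
  assumes "summable (\<lambda>t. f (Suc t) - f t)"
  shows "convergent f"
proof -
  have "(\<lambda>t. f 0 + (\<Sum>s<t. f (Suc s) - f s)) \<longlonglongrightarrow> f 0 + (\<Sum>s. f (Suc s) - f s)"
    by (intro tendsto_add tendsto_const summable_LIMSEQ assms)
  then show ?thesis
    by (auto simp: sum_lessThan_telescope convergent_def)
qed

lemma no_oscillation_of_summable_variation:
  fixes G D f :: "nat \<Rightarrow> real"
  assumes \<delta>: "0 < \<delta>"
    and large: "\<forall>\<^sub>F t in sequentially. 3 * \<delta> \<le> G t + D t"
    and G_small: "\<exists>\<^sub>F t in sequentially. G t < \<delta>"
    and D_small: "\<exists>\<^sub>F t in sequentially. D t < \<delta>"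
    and steps: "\<forall>\<^sub>F t in sequentially. \<bar>D (Suc t) - D t\<bar> < \<delta> / 4"
    and "\<And>t. 0 \<le> f t" "summable f"
    and variation: "\<forall>\<^sub>F t in sequentially. \<delta> \<le> G t \<longrightarrow> \<delta> \<le> D t \<longrightarrow> \<bar>D (Suc t) - D t\<bar> \<le> f t"
  shows False
proof -
  \<comment> \<open>Clamping freezes D unless G t and D t are both at least \<delta>, since one step moves D by
      less than \<delta> / 4; so the clamped sequence has summable variation, hence a limit.\<close>
  define clamp where "clamp t = max (5 * \<delta> / 4) (min (7 * \<delta> / 4) (D t))" for t
  have "\<forall>\<^sub>F t in sequentially. \<bar>clamp (Suc t) - clamp t\<bar> \<le> f t"
    using large steps variation
  proof eventually_elim
    case (elim t)
    show ?case
    proof (cases "\<delta> \<le> G t \<and> \<delta> \<le> D t")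
      case True
      have "\<bar>clamp (Suc t) - clamp t\<bar> \<le> \<bar>D (Suc t) - D t\<bar>"
        unfolding clamp_def by (auto simp: max_def min_def abs_if)
      with True elim show ?thesis
        by linarith
    next
      case False
      with elim \<delta> have "clamp (Suc t) = clamp t"
        unfolding clamp_def by (auto simp: max_def min_def abs_if)
      then show ?thesis
        using \<open>0 \<le> f t\<close> by simp
    qed
  qed
  then have "summable (\<lambda>t. clamp (Suc t) - clamp t)"
    by (intro summable_comparison_test_ev[OF _ \<open>summable f\<close>]) simp
  then obtain L where "clamp \<longlonglongrightarrow> L"
    using convergent_if_summable_diff convergent_def by blast
  then have "(\<lambda>t. \<bar>clamp t - L\<bar>) \<longlonglongrightarrow> 0"
    by (intro tendsto_rabs_zero LIM_zero)
  then have near_L: "\<forall>\<^sub>F t in sequentially. \<bar>clamp t - L\<bar> < \<delta> / 8"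
    using \<delta> by (intro order_tendstoD(2)) auto
  have "\<exists>\<^sub>F t in sequentially. G t < \<delta> \<and> 3 * \<delta> \<le> G t + D t \<and> \<bar>clamp t - L\<bar> < \<delta> / 8"
    by (intro frequently_eventually_frequently G_small eventually_conj large near_L)
  then obtain t1 where "G t1 < \<delta>" "3 * \<delta> \<le> G t1 + D t1" "\<bar>clamp t1 - L\<bar> < \<delta> / 8"
    by (auto dest: frequently_ex)
  then have upper: "\<bar>7 * \<delta> / 4 - L\<bar> < \<delta> / 8"
    unfolding clamp_def using \<delta> by (simp add: max_def min_def)
  have "\<exists>\<^sub>F t in sequentially. D t < \<delta> \<and> \<bar>clamp t - L\<bar> < \<delta> / 8"
    by (intro frequently_eventually_frequently D_small near_L)
  then obtain t2 where "D t2 < \<delta>" "\<bar>clamp t2 - L\<bar> < \<delta> / 8"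
    by (auto dest: frequently_ex)
  then have lower: "\<bar>5 * \<delta> / 4 - L\<bar> < \<delta> / 8"
    unfolding clamp_def using \<delta> by simp
  from upper lower \<delta> show False
    by linarith
qed

lemma frequently_small_imp_zero_limit_point:
  fixes c :: "nat \<Rightarrow> 'a::heine_borel" and \<Phi> :: "'a \<Rightarrow> real"
  assumes "bounded (range c)" "continuous_on UNIV \<Phi>"
    and small: "\<And>\<epsilon>. 0 < \<epsilon> \<Longrightarrow> \<exists>\<^sub>F t in sequentially. \<Phi> (c t) < \<epsilon>"
  shows "\<exists>l q. filterlim q sequentially sequentially \<and> (\<lambda>k. c (q k)) \<longlonglongrightarrow> l \<and> \<Phi> l \<le> 0"
proof -
  have "\<forall>k. \<exists>t\<ge>k. \<Phi> (c t) < 1 / Suc k"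
    using small[of "1 / Suc _"] by (simp add: frequently_sequentially)
  then obtain r where r: "\<And>k. k \<le> r k" "\<And>k. \<Phi> (c (r k)) < 1 / Suc k"
    by metis
  have "range (c \<circ> r) \<subseteq> range c"
    by auto
  then have "bounded (range (c \<circ> r))"
    using bounded_subset[OF assms(1)] by blast
  then obtain l s where "strict_mono s" and lim: "(c \<circ> r \<circ> s) \<longlonglongrightarrow> l"
    using bounded_imp_convergent_subsequence by blast
  have "filterlim (r \<circ> s) sequentially sequentially"
    using filterlim_subseq[OF \<open>strict_mono s\<close>] r(1)
    by (auto simp: filterlim_at_top intro: eventually_mono le_trans)
  moreover have "\<Phi> l \<le> 0"
  proof (rule LIMSEQ_le)
    show "(\<lambda>k. \<Phi> (c (r (s k)))) \<longlonglongrightarrow> \<Phi> l"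
      using continuous_on_tendsto_compose[OF assms(2) lim] by (simp add: o_def)
    show "(\<lambda>k. 1 / Suc (s k)) \<longlonglongrightarrow> (0::real)"
      using LIMSEQ_subseq_LIMSEQ[OF LIMSEQ_inverse_real_of_nat \<open>strict_mono s\<close>]
      by (simp add: o_def inverse_eq_divide)
    show "\<exists>N. \<forall>k\<ge>N. \<Phi> (c (r (s k))) \<le> 1 / Suc (s k)"
      using r(2) less_imp_le by blast
  qed
  ultimately show ?thesis
    using lim unfolding o_def by blast
qed

section \<open>The distributed iteration\<close>

lemma cfp_solutionsD:
  assumes "z \<in> cfp_solutions n g X" "i < n"
  shows "z \<in> X i" "g i z \<le> 0"
  using assms unfolding cfp_solutions_def by auto

locale cfp_iteration =
  fixes n :: nat
    and a :: "nat \<Rightarrow> nat \<Rightarrow> real"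
    and g :: "nat \<Rightarrow> 'a::euclidean_space \<Rightarrow> real"
    and X :: "nat \<Rightarrow> 'a set"
    and dg :: "nat \<Rightarrow> 'a \<Rightarrow> 'a"
    and K h :: real
    and \<alpha> \<beta> :: "nat \<Rightarrow> real"
    and x :: "nat \<Rightarrow> nat \<Rightarrow> 'a"
  assumes n_pos: "n \<ge> 1"
    and a_symm: "\<And>i j. i < n \<Longrightarrow> j < n \<Longrightarrow> a i j = a j i"
    and a_nonneg: "\<And>i j. i < n \<Longrightarrow> j < n \<Longrightarrow> a i j \<ge> 0"
    and conn: "connected_graph n a"
    and g_cont: "\<And>i. i < n \<Longrightarrow> continuous_on UNIV (g i)"
    and X_closed: "\<And>i. i < n \<Longrightarrow> closed (X i)"
    and X_convex: "\<And>i. i < n \<Longrightarrow> convex (X i)"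
    and sol_nonempty: "cfp_solutions n g X \<noteq> {}"
    and dg_sel: "\<And>i. i < n \<Longrightarrow> is_plus_subgrad_selection (g i) (dg i)"
    and dg_bound: "\<And>i y. i < n \<Longrightarrow> norm (dg i y) \<le> K"
    and alpha_range: "\<And>t. 0 \<le> \<alpha> t \<and> \<alpha> t \<le> 1"
    and alpha_div: "\<not> summable \<alpha>"
    and alpha_sq: "summable (\<lambda>t. (\<alpha> t)\<^sup>2)"
    and beta_nonneg: "\<And>t. \<beta> t \<ge> 0"
    and beta_div: "\<not> summable \<beta>"
    and beta_sq: "summable (\<lambda>t. (\<beta> t)\<^sup>2)"
    and h_pos: "h > 0"
    and h_bound: "h * Max ((\<lambda>i. \<Sum>j<n. a i j) ` {..<n}) < 1"
    and dyn: "\<And>t i. i < n \<Longrightarrow>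
      (let y = x t i + h *\<^sub>R (\<Sum>j<n. a i j *\<^sub>R (x t j - x t i));
           grad = \<beta> t *\<^sub>R dg i y;
           \<xi> = y - grad;
           \<phi> = \<alpha> t *\<^sub>R (\<xi> - closest_point (X i) \<xi>);
           u = h *\<^sub>R (\<Sum>j<n. a i j *\<^sub>R (x t j - x t i)) - grad - \<phi>
       in x (Suc t) i = x t i + u)"
begin

definition deg :: "nat \<Rightarrow> real" where
  "deg i = (\<Sum>j<n. a i j)"

text \<open>The entries of I - h L, L the Laplacian of the weighted graph; see y_eq_weighted_sum.\<close>

definition weight :: "nat \<Rightarrow> nat \<Rightarrow> real" where
  "weight i j = h * a i j + (if i = j then 1 - h * deg i else 0)"

definition y :: "nat \<Rightarrow> nat \<Rightarrow> 'a" where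
  "y t i = x t i + h *\<^sub>R (\<Sum>j<n. a i j *\<^sub>R (x t j - x t i))"

definition \<xi> :: "nat \<Rightarrow> nat \<Rightarrow> 'a" where
  "\<xi> t i = y t i - \<beta> t *\<^sub>R dg i (y t i)"

definition residual :: "nat \<Rightarrow> nat \<Rightarrow> real" where
  "residual t i = norm (\<xi> t i - closest_point (X i) (\<xi> t i))"

definition sq_dist_sum :: "'a \<Rightarrow> nat \<Rightarrow> real" where
  "sq_dist_sum z t = (\<Sum>i<n. (norm (x t i - z))\<^sup>2)"

definition disagreement :: "nat \<Rightarrow> real" where
  "disagreement t = (\<Sum>i<n. \<Sum>j<n. weight i j * (norm (x t j - y t i))\<^sup>2)"

definition subgrad_progress :: "nat \<Rightarrow> real" where
  "subgrad_progress t = \<beta> t * (\<Sum>i<n. max (g i (y t i)) 0)"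

definition proj_progress :: "nat \<Rightarrow> real" where
  "proj_progress t = \<alpha> t * (\<Sum>i<n. (residual t i)\<^sup>2)"

definition violation :: "'a \<Rightarrow> real" where
  "violation v = (\<Sum>i<n. max (g i v) 0)"

definition infeasibility :: "'a \<Rightarrow> real" where
  "infeasibility v = (\<Sum>i<n. infdist v (X i))"

definition average :: "nat \<Rightarrow> 'a" where
  "average t = (1 / real n) *\<^sub>R (\<Sum>i<n. x t i)"

lemma K_nonneg: "0 \<le> K"
proof -
  have "norm (dg 0 0) \<le> K"
    using dg_bound n_pos by simp
  then show ?thesis
    using norm_ge_zero order_trans by blast
qed

lemma x_Suc: "i < n \<Longrightarrow> x (Suc t) i = \<xi> t i - \<alpha> t *\<^sub>R (\<xi> t i - closest_point (X i) (\<xi> t i))"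
  using dyn[of i t] unfolding \<xi>_def y_def Let_def by (simp add: algebra_simps)

lemma h_deg_less_1: "i < n \<Longrightarrow> h * deg i < 1"
proof -
  assume "i < n"
  then have "deg i \<le> Max ((\<lambda>i. \<Sum>j<n. a i j) ` {..<n})"
    unfolding deg_def by (intro Max_ge) auto
  then have "h * deg i \<le> h * Max ((\<lambda>i. \<Sum>j<n. a i j) ` {..<n})"
    using h_pos by simp
  with h_bound show ?thesis
    by simp
qed

lemma weight_nonneg: "i < n \<Longrightarrow> j < n \<Longrightarrow> 0 \<le> weight i j"
  unfolding weight_def using h_deg_less_1[of i] a_nonneg[of i j] h_pos by auto

lemma weight_diag_pos: "i < n \<Longrightarrow> 0 < weight i i"
  unfolding weight_def using h_deg_less_1[of i] a_nonneg[of i i] h_pos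
  by (simp add: add_nonneg_pos)

lemma weight_row_sum: "i < n \<Longrightarrow> (\<Sum>j<n. weight i j) = 1"
  unfolding weight_def deg_def by (simp add: sum.distrib sum_distrib_left)

lemma weight_sym: "i < n \<Longrightarrow> j < n \<Longrightarrow> weight i j = weight j i"
  unfolding weight_def using a_symm by auto

lemma weight_col_sum: "j < n \<Longrightarrow> (\<Sum>i<n. weight i j) = 1"
  using weight_row_sum[of j] weight_sym[of _ j] by simp

lemma y_eq_weighted_sum:
  assumes "i < n"
  shows "y t i = (\<Sum>j<n. weight i j *\<^sub>R x t j)"
proof -
  have "weight i j *\<^sub>R x t j = (h * a i j) *\<^sub>R x t j + (if j = i then (1 - h * deg i) *\<^sub>R x t i else 0)" for j
    by (simp add: weight_def scaleR_add_left)
  then have "(\<Sum>j<n. weight i j *\<^sub>R x t j) = (\<Sum>j<n. (h * a i j) *\<^sub>R x t j) + (1 - h * deg i) *\<^sub>R x t i"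
    using assms by (simp add: sum.distrib)
  also have "\<dots> = y t i"
    unfolding y_def deg_def
    by (simp add: scaleR_diff_right sum_subtractf scaleR_sum_right scaleR_sum_left[symmetric] algebra_simps)
  finally show ?thesis ..
qed

lemma sum_sq_dist_y_eq: "(\<Sum>i<n. (norm (y t i - z))\<^sup>2) = sq_dist_sum z t - disagreement t"
proof -
  have "(\<Sum>i<n. (norm (y t i - z))\<^sup>2)
      = (\<Sum>i<n. (\<Sum>j<n. weight i j * (norm (x t j - z))\<^sup>2) - (\<Sum>j<n. weight i j * (norm (x t j - y t i))\<^sup>2))"
    using sum_weighted_sq_dist[OF weight_row_sum, of _ "x t" z] y_eq_weighted_sum
    by (intro sum.cong) auto
  also have "\<dots> = (\<Sum>j<n. (\<Sum>i<n. weight i j) * (norm (x t j - z))\<^sup>2) - disagreement t"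
    unfolding disagreement_def sum_subtractf
    by (subst sum.swap) (simp add: sum_distrib_right)
  also have "\<dots> = sq_dist_sum z t - disagreement t"
    unfolding sq_dist_sum_def by (simp add: weight_col_sum)
  finally show ?thesis .
qed

lemma sq_dist_sum_Suc_le:
  assumes "z \<in> cfp_solutions n g X"
  shows "sq_dist_sum z (Suc t)
           \<le> sq_dist_sum z t - (disagreement t + 2 * subgrad_progress t + proj_progress t) + n * (\<beta> t)\<^sup>2 * K\<^sup>2"
proof -
  have step_le: "(norm (x (Suc t) i - z))\<^sup>2
          \<le> (norm (y t i - z))\<^sup>2 - 2 * \<beta> t * max (g i (y t i)) 0 + (\<beta> t)\<^sup>2 * K\<^sup>2 - \<alpha> t * (residual t i)\<^sup>2"
    if "i < n" for i
  proof -
    have "(norm (x (Suc t) i - z))\<^sup>2 \<le> (norm (\<xi> t i - z))\<^sup>2 - \<alpha> t * (residual t i)\<^sup>2"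
      unfolding x_Suc[OF that] residual_def using that alpha_range[of t]
      by (intro relaxed_projection_sq_dist_le X_convex X_closed cfp_solutionsD(1)[OF assms]) auto
    moreover have "(norm (\<xi> t i - z))\<^sup>2 \<le> (norm (y t i - z))\<^sup>2 - 2 * \<beta> t * max (g i (y t i)) 0 + (\<beta> t)\<^sup>2 * K\<^sup>2"
      unfolding \<xi>_def using that
      by (intro subgradient_step_sq_dist_le dg_sel dg_bound beta_nonneg cfp_solutionsD(2)[OF assms])
    ultimately show ?thesis
      by linarith
  qed
  have "sq_dist_sum z (Suc t) \<le> (\<Sum>i<n. (norm (y t i - z))\<^sup>2
      - 2 * \<beta> t * max (g i (y t i)) 0 + (\<beta> t)\<^sup>2 * K\<^sup>2 - \<alpha> t * (residual t i)\<^sup>2)"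
    unfolding sq_dist_sum_def using step_le by (intro sum_mono) auto
  also have "\<dots> = sq_dist_sum z t - (disagreement t + 2 * subgrad_progress t + proj_progress t) + n * (\<beta> t)\<^sup>2 * K\<^sup>2"
    using sum_sq_dist_y_eq[of t z] unfolding subgrad_progress_def proj_progress_def
    by (simp add: sum.distrib sum_subtractf sum_distrib_left algebra_simps)
  finally show ?thesis .
qed

lemma disagreement_nonneg: "0 \<le> disagreement t"
  unfolding disagreement_def by (intro sum_nonneg mult_nonneg_nonneg weight_nonneg) auto

lemma subgrad_progress_nonneg: "0 \<le> subgrad_progress t"
  unfolding subgrad_progress_def by (intro mult_nonneg_nonneg sum_nonneg beta_nonneg) auto

lemma proj_progress_nonneg: "0 \<le> proj_progress t"
  unfolding proj_progress_def using alpha_range by (intro mult_nonneg_nonneg sum_nonneg) auto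

lemma
  assumes "z \<in> cfp_solutions n g X"
  shows summable_progress: "summable (\<lambda>t. disagreement t + 2 * subgrad_progress t + proj_progress t)"
    and convergent_sq_dist_sum: "convergent (sq_dist_sum z)"
proof -
  have e_summable: "summable (\<lambda>t. real n * (\<beta> t)\<^sup>2 * K\<^sup>2)"
    using beta_sq by (intro summable_mult summable_mult2)
  have e_nonneg: "0 \<le> real n * (\<beta> t)\<^sup>2 * K\<^sup>2" for t
    by simp
  have u_nonneg: "0 \<le> disagreement t + 2 * subgrad_progress t + proj_progress t" for t
    using disagreement_nonneg subgrad_progress_nonneg proj_progress_nonneg by (simp add: add_nonneg_nonneg)
  have v_nonneg: "0 \<le> sq_dist_sum z t" for t
    unfolding sq_dist_sum_def by (simp add: sum_nonneg)
  note fejer = quasi_fejer_summable_convergent[of "sq_dist_sum z" "\<lambda>t. disagreement t + 2 * subgrad_progress t + proj_progress t"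
      "\<lambda>t. real n * (\<beta> t)\<^sup>2 * K\<^sup>2", OF v_nonneg u_nonneg e_nonneg e_summable sq_dist_sum_Suc_le[OF assms]]
  show "summable (\<lambda>t. disagreement t + 2 * subgrad_progress t + proj_progress t)"
    by (fact fejer(1))
  show "convergent (sq_dist_sum z)"
    by (fact fejer(2))
qed

lemma summable_disagreement: "summable disagreement"
  and summable_subgrad_progress: "summable subgrad_progress"
  and summable_proj_progress: "summable proj_progress"
proof -
  obtain z where "z \<in> cfp_solutions n g X"
    using sol_nonempty by blast
  note progress = summable_progress[OF this]
  note bounds = disagreement_nonneg subgrad_progress_nonneg proj_progress_nonneg
  show "summable disagreement"
    by (rule summable_comparison_test'[OF progress, of 0]) (use bounds in auto)
  show "summable subgrad_progress"
    by (rule summable_comparison_test'[OF progress, of 0]) (use bounds in auto)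
  show "summable proj_progress"
    by (rule summable_comparison_test'[OF progress, of 0]) (use bounds in auto)
qed

lemma disagreement_ge_edge:
  assumes "k < n" "l < n" "k \<noteq> l"
  shows "weight k k * (norm (x t k - y t k))\<^sup>2 + weight k l * (norm (x t l - y t k))\<^sup>2 \<le> disagreement t"
proof -
  have "weight k k * (norm (x t k - y t k))\<^sup>2 + weight k l * (norm (x t l - y t k))\<^sup>2
      = (\<Sum>j\<in>{k, l}. weight k j * (norm (x t j - y t k))\<^sup>2)"
    using assms(3) by simp
  also have "\<dots> \<le> (\<Sum>j<n. weight k j * (norm (x t j - y t k))\<^sup>2)"
    using assms by (intro sum_mono2) (auto intro!: mult_nonneg_nonneg weight_nonneg)
  also have "\<dots> \<le> disagreement t"
    unfolding disagreement_def using assms(1)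
    by (intro member_le_sum[where f = "\<lambda>i. \<Sum>j<n. weight i j * (norm (x t j - y t i))\<^sup>2"])
      (auto intro!: sum_nonneg mult_nonneg_nonneg weight_nonneg)
  finally show ?thesis .
qed

lemma edge_sq_dist_le_disagreement:
  assumes "k < n" "l < n" "k \<noteq> l"
  shows "min (weight k k) (weight k l) * (norm (x t k - x t l))\<^sup>2 \<le> 2 * disagreement t"
proof -
  define \<mu> where "\<mu> = min (weight k k) (weight k l)"
  define A where "A = norm (x t k - y t k)"
  define B where "B = norm (x t l - y t k)"
  have "0 \<le> \<mu>"
    unfolding \<mu>_def using weight_nonneg assms(1,2) by simp
  have "norm (x t k - x t l) \<le> A + B"
    unfolding A_def B_def using norm_triangle_ineq4[of "x t k - y t k" "x t l - y t k"] by simp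
  then have "(norm (x t k - x t l))\<^sup>2 \<le> (A + B)\<^sup>2"
    by (intro power_mono) auto
  also have "\<dots> \<le> 2 * (A\<^sup>2 + B\<^sup>2)"
    using sum_squares_ge_zero[of "A - B" 0] by (simp add: power2_eq_square algebra_simps)
  finally have "\<mu> * (norm (x t k - x t l))\<^sup>2 \<le> \<mu> * (2 * (A\<^sup>2 + B\<^sup>2))"
    using \<open>0 \<le> \<mu>\<close> by (rule mult_left_mono)
  also have "\<dots> = 2 * (\<mu> * (A\<^sup>2 + B\<^sup>2))"
    by simp
  also have "\<mu> * (A\<^sup>2 + B\<^sup>2) \<le> weight k k * A\<^sup>2 + weight k l * B\<^sup>2"
    unfolding \<mu>_def distrib_left by (intro add_mono mult_right_mono) auto
  also have "\<dots> \<le> disagreement t"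
    unfolding A_def B_def using assms by (rule disagreement_ge_edge)
  finally show ?thesis
    unfolding \<mu>_def by simp
qed

lemma edge_consensus:
  assumes "(k, l) \<in> graph_edges n a"
  shows "(\<lambda>t. x t k - x t l) \<longlonglongrightarrow> 0"
proof (cases "k = l")
  case False
  from assms have "k < n" "l < n" "0 < a k l"
    unfolding graph_edges_def by auto
  define \<mu> where "\<mu> = min (weight k k) (weight k l)"
  have "0 < weight k l"
    unfolding weight_def using False \<open>0 < a k l\<close> h_pos by simp
  then have "0 < \<mu>"
    unfolding \<mu>_def using weight_diag_pos[OF \<open>k < n\<close>] by simp
  have "\<forall>t. norm ((norm (x t k - x t l))\<^sup>2) \<le> 2 * disagreement t / \<mu>"
    using edge_sq_dist_le_disagreement[OF \<open>k < n\<close> \<open>l < n\<close> False] \<open>0 < \<mu>\<close>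
    unfolding \<mu>_def[symmetric] by (simp add: pos_le_divide_eq mult.commute)
  moreover have "(\<lambda>t. 2 * disagreement t / \<mu>) \<longlonglongrightarrow> 0"
    by (intro tendsto_divide_zero tendsto_mult_right_zero summable_LIMSEQ_zero summable_disagreement)
  ultimately have "(\<lambda>t. (norm (x t k - x t l))\<^sup>2) \<longlonglongrightarrow> 0"
    by (rule Lim_null_comparison[OF always_eventually])
  then show ?thesis
    by (simp add: tendsto_norm_zero_iff)
qed simp

lemma consensus:
  assumes "i < n" "j < n"
  shows "(\<lambda>t. x t i - x t j) \<longlonglongrightarrow> 0"
proof (rule rtrancl_tendsto_diff_zero)
  show "(i, j) \<in> (graph_edges n a)\<^sup>*"
    using conn assms unfolding connected_graph_def by simp
qed (fact edge_consensus)

lemma X_nonempty: "i < n \<Longrightarrow> X i \<noteq> {}"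
  using sol_nonempty by (auto dest: cfp_solutionsD(1))

lemma alpha_tendsto_zero: "\<alpha> \<longlonglongrightarrow> 0"
  using summable_LIMSEQ_zero[OF alpha_sq] by simp

lemma beta_tendsto_zero: "\<beta> \<longlonglongrightarrow> 0"
  using summable_LIMSEQ_zero[OF beta_sq] by simp

lemma states_bounded:
  assumes "z \<in> cfp_solutions n g X"
  obtains B where "\<And>t i. i < n \<Longrightarrow> norm (x t i - z) \<le> B"
proof -
  obtain B where B: "\<And>t. norm (sq_dist_sum z t) \<le> B"
    using convergent_sq_dist_sum[OF assms] convergent_imp_Bseq BseqE by metis
  have "norm (x t i - z) \<le> sqrt B" if "i < n" for t i
  proof (rule real_le_rsqrt)
    have "(norm (x t i - z))\<^sup>2 \<le> sq_dist_sum z t"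
      unfolding sq_dist_sum_def using that by (intro member_le_sum) auto
    with B[of t] show "(norm (x t i - z))\<^sup>2 \<le> B"
      by simp
  qed
  then show ?thesis
    using that by blast
qed

lemma average_minus: "average t - v = (1 / real n) *\<^sub>R (\<Sum>i<n. x t i - v)"
  unfolding average_def using n_pos by (simp add: sum_subtractf scaleR_diff_right sum_constant_scaleR)

lemma state_minus_average_tendsto_zero:
  assumes "i < n"
  shows "(\<lambda>t. x t i - average t) \<longlonglongrightarrow> 0"
proof -
  have "(\<lambda>t. - ((1 / real n) *\<^sub>R (\<Sum>j<n. x t j - x t i))) \<longlonglongrightarrow> - ((1 / real n) *\<^sub>R 0)"
    using assms by (intro tendsto_minus tendsto_scaleR tendsto_const tendsto_null_sum consensus) auto
  then show ?thesis
    by (simp add: average_minus[symmetric])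
qed

lemma y_minus_state_tendsto_zero:
  assumes "i < n"
  shows "(\<lambda>t. y t i - x t i) \<longlonglongrightarrow> 0"
proof -
  have "(\<lambda>t. h *\<^sub>R (\<Sum>j<n. a i j *\<^sub>R (x t j - x t i))) \<longlonglongrightarrow> h *\<^sub>R 0"
    using assms by (intro tendsto_scaleR tendsto_const tendsto_null_sum)
      (auto intro: tendsto_scaleR[THEN tendsto_eq_rhs] consensus)
  then show ?thesis
    by (simp add: y_def)
qed

lemma \<xi>_minus_y_le:
  assumes "i < n"
  shows "norm (\<xi> t i - y t i) \<le> \<beta> t * K"
proof -
  have "norm (\<xi> t i - y t i) = \<beta> t * norm (dg i (y t i))"
    unfolding \<xi>_def using beta_nonneg[of t] by simp
  also have "\<dots> \<le> \<beta> t * K"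
    using dg_bound[OF assms] beta_nonneg[of t] by (rule mult_left_mono)
  finally show ?thesis .
qed

lemma y_minus_average_tendsto_zero:
  assumes "i < n"
  shows "(\<lambda>t. y t i - average t) \<longlonglongrightarrow> 0"
proof -
  have "(\<lambda>t. (y t i - x t i) + (x t i - average t)) \<longlonglongrightarrow> 0 + 0"
    using assms by (intro tendsto_add y_minus_state_tendsto_zero state_minus_average_tendsto_zero)
  then show ?thesis
    by simp
qed

lemma \<xi>_minus_average_tendsto_zero:
  assumes "i < n"
  shows "(\<lambda>t. \<xi> t i - average t) \<longlonglongrightarrow> 0"
proof -
  have "\<forall>t. norm (\<xi> t i - y t i) \<le> \<beta> t * K"
    using \<xi>_minus_y_le[OF assms] by blast
  moreover have "(\<lambda>t. \<beta> t * K) \<longlonglongrightarrow> 0"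
    by (intro tendsto_mult_left_zero beta_tendsto_zero)
  ultimately have "(\<lambda>t. \<xi> t i - y t i) \<longlonglongrightarrow> 0"
    by (rule Lim_null_comparison[OF always_eventually])
  from tendsto_add[OF this y_minus_average_tendsto_zero[OF assms]] show ?thesis
    by simp
qed

lemma average_bounded: "bounded (range average)"
proof -
  obtain z where z: "z \<in> cfp_solutions n g X"
    using sol_nonempty by blast
  obtain B where B: "\<And>t i. i < n \<Longrightarrow> norm (x t i - z) \<le> B"
    using states_bounded[OF z] by blast
  have "dist z (average t) \<le> B" for t
  proof -
    have "dist z (average t) = norm (average t - z)"
      by (metis dist_commute dist_norm)
    also have "\<dots> = (1 / real n) * norm (\<Sum>i<n. x t i - z)"
      unfolding average_minus by simp
    also have "\<dots> \<le> (1 / real n) * (\<Sum>i<n. norm (x t i - z))"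
      by (intro mult_left_mono norm_sum) auto
    also have "\<dots> \<le> (1 / real n) * (\<Sum>i<n. B)"
      using B by (intro mult_left_mono sum_mono) auto
    also have "\<dots> = B"
      using n_pos by simp
    finally show ?thesis .
  qed
  then show ?thesis
    unfolding bounded_def by blast
qed

lemma y_dist_le:
  assumes "i < n" "\<And>j. j < n \<Longrightarrow> norm (x t j - z) \<le> B"
  shows "norm (y t i - z) \<le> B"
proof -
  have "y t i - z = (\<Sum>j<n. weight i j *\<^sub>R (x t j - z))"
    using y_eq_weighted_sum[OF assms(1)] weight_row_sum[OF assms(1)]
    by (simp add: scaleR_diff_right sum_subtractf scaleR_sum_left[symmetric])
  then have "norm (y t i - z) \<le> (\<Sum>j<n. norm (weight i j *\<^sub>R (x t j - z)))"
    by (metis norm_sum)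
  also have "\<dots> \<le> (\<Sum>j<n. weight i j * B)"
    using weight_nonneg[OF assms(1)] assms(2) by (intro sum_mono) (simp add: mult_left_mono)
  finally show ?thesis
    using weight_row_sum[OF assms(1)] by (simp add: sum_distrib_right[symmetric])
qed

lemma residual_bounded: obtains R where "0 \<le> R" "\<And>t i. i < n \<Longrightarrow> residual t i \<le> R"
proof -
  obtain z where z: "z \<in> cfp_solutions n g X"
    using sol_nonempty by blast
  obtain B where B: "\<And>t i. i < n \<Longrightarrow> norm (x t i - z) \<le> B"
    using states_bounded[OF z] by blast
  have "0 \<le> B"
    using order_trans[OF norm_ge_zero B[of 0 0]] n_pos by simp
  have "Bseq \<beta>"
    using beta_tendsto_zero by (rule convergent_imp_Bseq[OF convergentI])
  then obtain Bb where "0 < Bb" and Bb: "\<And>t. norm (\<beta> t) \<le> Bb"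
    by (metis BseqE)
  have "residual t i \<le> Bb * K + B" if "i < n" for t i
  proof -
    have "residual t i \<le> norm (\<xi> t i - z)"
      unfolding residual_def using closest_point_le[OF X_closed cfp_solutionsD(1)[OF z]] that
      by (simp add: dist_norm)
    also have "\<dots> \<le> norm (\<xi> t i - y t i) + norm (y t i - z)"
      using norm_triangle_ineq[of "\<xi> t i - y t i" "y t i - z"] by simp
    also have "norm (\<xi> t i - y t i) \<le> Bb * K"
    proof -
      have "\<beta> t \<le> Bb"
        using Bb[of t] by simp
      with \<xi>_minus_y_le[OF that, of t] K_nonneg show ?thesis
        by (meson mult_right_mono order_trans)
    qed
    also have "norm (y t i - z) \<le> B"
      using y_dist_le[OF that] B by blast
    finally show ?thesis
      by simp
  qed
  moreover have "0 \<le> Bb * K + B"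
    using \<open>0 < Bb\<close> K_nonneg \<open>0 \<le> B\<close> by simp
  ultimately show ?thesis
    using that by blast
qed

lemma sum_y_eq_sum_x: "(\<Sum>i<n. y t i) = (\<Sum>i<n. x t i)"
proof -
  have "(\<Sum>i<n. y t i) = (\<Sum>i<n. \<Sum>j<n. weight i j *\<^sub>R x t j)"
    by (simp add: y_eq_weighted_sum)
  also have "\<dots> = (\<Sum>j<n. (\<Sum>i<n. weight i j) *\<^sub>R x t j)"
    by (subst sum.swap) (simp add: scaleR_sum_left)
  finally show ?thesis
    by (simp add: weight_col_sum)
qed

lemma average_step_le:
  assumes "\<And>i. i < n \<Longrightarrow> residual t i \<le> R"
  shows "norm (average (Suc t) - average t) \<le> \<beta> t * K + \<alpha> t * R"
proof -
  have "average (Suc t) - average t = (1 / real n) *\<^sub>R (\<Sum>i<n. x (Suc t) i - y t i)"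
    unfolding average_def by (simp add: sum_subtractf sum_y_eq_sum_x scaleR_diff_right)
  moreover have step_le: "norm (x (Suc t) i - y t i) \<le> \<beta> t * K + \<alpha> t * R" if "i < n" for i
  proof -
    have "x (Suc t) i - y t i = - (\<beta> t *\<^sub>R dg i (y t i)) - \<alpha> t *\<^sub>R (\<xi> t i - closest_point (X i) (\<xi> t i))"
      using x_Suc[OF that] by (simp add: \<xi>_def)
    then have "norm (x (Suc t) i - y t i) \<le> \<beta> t * norm (dg i (y t i)) + \<alpha> t * residual t i"
      using norm_triangle_ineq4[of "- (\<beta> t *\<^sub>R dg i (y t i))" "\<alpha> t *\<^sub>R (\<xi> t i - closest_point (X i) (\<xi> t i))"]
        beta_nonneg[of t] alpha_range[of t]
      by (simp add: residual_def)
    also have "\<dots> \<le> \<beta> t * K + \<alpha> t * R"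
      using dg_bound[OF that] assms[OF that] beta_nonneg alpha_range
      by (intro add_mono mult_left_mono) auto
    finally show ?thesis .
  qed
  ultimately have "norm (average (Suc t) - average t) = (1 / real n) * norm (\<Sum>i<n. x (Suc t) i - y t i)"
    by simp
  also have "\<dots> \<le> (1 / real n) * (\<Sum>i<n. norm (x (Suc t) i - y t i))"
    by (intro mult_left_mono norm_sum) auto
  also have "\<dots> \<le> (1 / real n) * (\<Sum>i<n. \<beta> t * K + \<alpha> t * R)"
    using step_le by (intro mult_left_mono sum_mono) auto
  also have "\<dots> = \<beta> t * K + \<alpha> t * R"
    using n_pos by simp
  finally show ?thesis .
qed

subsection \<open>A limit point of the average solves the problem\<close>

lemma violation_nonneg: "0 \<le> violation v"
  unfolding violation_def by (intro sum_nonneg) auto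

lemma infeasibility_nonneg: "0 \<le> infeasibility v"
  unfolding infeasibility_def by (intro sum_nonneg infdist_nonneg)

lemma infeasibility_diff_le: "\<bar>infeasibility u - infeasibility v\<bar> \<le> real n * norm (u - v)"
proof -
  have "\<bar>infeasibility u - infeasibility v\<bar> \<le> (\<Sum>i<n. \<bar>infdist u (X i) - infdist v (X i)\<bar>)"
    unfolding infeasibility_def sum_subtractf[symmetric] by (rule sum_abs)
  also have "\<dots> \<le> (\<Sum>i<n. norm (u - v))"
    by (intro sum_mono) (metis infdist_triangle_abs dist_norm)
  finally show ?thesis
    by simp
qed

lemma violation_average_le:
  "violation (average t) \<le> (\<Sum>i<n. max (g i (y t i)) 0) + K * (\<Sum>i<n. norm (y t i - average t))"
proof -
  have "max (g i (average t)) 0 \<le> max (g i (y t i)) 0 + K * norm (average t - y t i)" if "i < n" for i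
    by (rule plus_subgrad_selection_lipschitz[OF dg_sel[OF that] dg_bound[OF that]])
  then have "violation (average t) \<le> (\<Sum>i<n. max (g i (y t i)) 0 + K * norm (average t - y t i))"
    unfolding violation_def by (intro sum_mono) auto
  then show ?thesis
    by (simp add: sum.distrib sum_distrib_left norm_minus_commute)
qed

lemma infeasibility_average_le:
  "infeasibility (average t) \<le> (\<Sum>i<n. residual t i) + (\<Sum>i<n. norm (\<xi> t i - average t))"
proof -
  have "infdist (average t) (X i) \<le> residual t i + norm (\<xi> t i - average t)" if "i < n" for i
  proof -
    have "infdist (\<xi> t i) (X i) \<le> residual t i"
      unfolding residual_def using infdist_le[OF closest_point_in_set[OF X_closed X_nonempty]] that
      by (simp add: dist_norm)
    then show ?thesis
      using infdist_triangle[of "average t" "X i" "\<xi> t i"] by (simp add: dist_norm norm_minus_commute)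
  qed
  then have "infeasibility (average t) \<le> (\<Sum>i<n. residual t i + norm (\<xi> t i - average t))"
    unfolding infeasibility_def by (intro sum_mono) auto
  then show ?thesis
    by (simp add: sum.distrib)
qed

lemma eventually_beta_le_subgrad_progress:
  assumes "0 < \<delta>"
  shows "\<forall>\<^sub>F t in sequentially. \<delta> \<le> violation (average t) \<longrightarrow> \<beta> t \<le> 2 / \<delta> * subgrad_progress t"
proof -
  have "(\<lambda>t. K * (\<Sum>i<n. norm (y t i - average t))) \<longlonglongrightarrow> 0"
    by (intro tendsto_mult_right_zero tendsto_null_sum tendsto_norm_zero y_minus_average_tendsto_zero) auto
  then have "\<forall>\<^sub>F t in sequentially. K * (\<Sum>i<n. norm (y t i - average t)) < \<delta> / 2"
    using assms by (intro order_tendstoD(2)) auto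
  then show ?thesis
  proof eventually_elim
    case (elim t)
    show ?case
    proof
      assume "\<delta> \<le> violation (average t)"
      with elim violation_average_le[of t] have "\<delta> / 2 \<le> (\<Sum>i<n. max (g i (y t i)) 0)"
        by linarith
      then have "\<beta> t * (\<delta> / 2) \<le> subgrad_progress t"
        unfolding subgrad_progress_def using beta_nonneg[of t] by (rule mult_left_mono)
      with assms show "\<beta> t \<le> 2 / \<delta> * subgrad_progress t"
        by (simp add: field_simps)
    qed
  qed
qed

lemma eventually_alpha_le_proj_progress:
  assumes "0 < \<delta>"
  shows "\<forall>\<^sub>F t in sequentially. \<delta> \<le> infeasibility (average t) \<longrightarrow> \<alpha> t \<le> 4 * real n / \<delta>\<^sup>2 * proj_progress t"
proof -
  have "(\<lambda>t. \<Sum>i<n. norm (\<xi> t i - average t)) \<longlonglongrightarrow> 0"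
    by (intro tendsto_null_sum tendsto_norm_zero \<xi>_minus_average_tendsto_zero) auto
  then have "\<forall>\<^sub>F t in sequentially. (\<Sum>i<n. norm (\<xi> t i - average t)) < \<delta> / 2"
    using assms by (intro order_tendstoD(2)) auto
  then show ?thesis
  proof eventually_elim
    case (elim t)
    show ?case
    proof
      assume "\<delta> \<le> infeasibility (average t)"
      with elim infeasibility_average_le[of t] have "\<delta> / 2 \<le> (\<Sum>i<n. residual t i)"
        by linarith
      then have "(\<delta> / 2)\<^sup>2 \<le> (\<Sum>i<n. residual t i * 1)\<^sup>2"
        using assms by (intro power_mono) auto
      also have "\<dots> \<le> (\<Sum>i<n. (residual t i)\<^sup>2) * n"
        using Cauchy_Schwarz_ineq_sum[of "residual t" "\<lambda>_. 1" "{..<n}"] by simp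
      finally have "\<delta>\<^sup>2 \<le> 4 * n * (\<Sum>i<n. (residual t i)\<^sup>2)"
        by (simp add: power_divide field_simps)
      then have "\<alpha> t * \<delta>\<^sup>2 \<le> \<alpha> t * (4 * n * (\<Sum>i<n. (residual t i)\<^sup>2))"
        using alpha_range[of t] by (intro mult_left_mono) auto
      with assms show "\<alpha> t \<le> 4 * real n / \<delta>\<^sup>2 * proj_progress t"
        unfolding proj_progress_def by (simp add: field_simps)
    qed
  qed
qed

lemma frequently_violation_less:
  assumes "0 < \<delta>"
  shows "\<exists>\<^sub>F t in sequentially. violation (average t) < \<delta>"
proof (rule ccontr)
  assume "\<not> ?thesis"
  then have "\<forall>\<^sub>F t in sequentially. \<delta> \<le> violation (average t)"
    by (simp add: not_frequently not_less)
  with eventually_beta_le_subgrad_progress[OF assms]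
  have "\<forall>\<^sub>F t in sequentially. norm (\<beta> t) \<le> 2 / \<delta> * subgrad_progress t"
    by eventually_elim (use beta_nonneg in auto)
  then have "summable \<beta>"
    by (rule summable_comparison_test_ev) (intro summable_mult summable_subgrad_progress)
  with beta_div show False ..
qed

lemma frequently_infeasibility_less:
  assumes "0 < \<delta>"
  shows "\<exists>\<^sub>F t in sequentially. infeasibility (average t) < \<delta>"
proof (rule ccontr)
  assume "\<not> ?thesis"
  then have "\<forall>\<^sub>F t in sequentially. \<delta> \<le> infeasibility (average t)"
    by (simp add: not_frequently not_less)
  with eventually_alpha_le_proj_progress[OF assms]
  have "\<forall>\<^sub>F t in sequentially. norm (\<alpha> t) \<le> 4 * real n / \<delta>\<^sup>2 * proj_progress t"
    by eventually_elim (use alpha_range in auto)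
  then have "summable \<alpha>"
    by (rule summable_comparison_test_ev) (intro summable_mult summable_proj_progress)
  with alpha_div show False ..
qed

lemma infeasibility_average_step_le:
  assumes "\<And>i. i < n \<Longrightarrow> residual t i \<le> R"
  shows "\<bar>infeasibility (average (Suc t)) - infeasibility (average t)\<bar> \<le> real n * (\<beta> t * K + \<alpha> t * R)"
  using infeasibility_diff_le mult_left_mono[OF average_step_le[OF assms]]
  by (meson of_nat_0_le_iff order_trans)

lemma eventually_infeasibility_average_step_less:
  assumes "0 < \<delta>" "\<And>t i. i < n \<Longrightarrow> residual t i \<le> R"
  shows "\<forall>\<^sub>F t in sequentially. \<bar>infeasibility (average (Suc t)) - infeasibility (average t)\<bar> < \<delta>"
proof -
  have "(\<lambda>t. \<beta> t * K + \<alpha> t * R) \<longlonglongrightarrow> 0"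
    using tendsto_add[OF tendsto_mult_left_zero[OF beta_tendsto_zero] tendsto_mult_left_zero[OF alpha_tendsto_zero]]
    by simp
  then have "(\<lambda>t. real n * (\<beta> t * K + \<alpha> t * R)) \<longlonglongrightarrow> 0"
    by (rule tendsto_mult_right_zero)
  then have "\<forall>\<^sub>F t in sequentially. real n * (\<beta> t * K + \<alpha> t * R) < \<delta>"
    using assms(1) by (intro order_tendstoD(2)) auto
  then show ?thesis
    using infeasibility_average_step_le[OF assms(2)] by (auto elim!: eventually_mono intro: le_less_trans)
qed

lemma eventually_infeasibility_average_step_le_progress:
  assumes "0 < \<delta>" "0 \<le> R" "\<And>t i. i < n \<Longrightarrow> residual t i \<le> R"
  shows "\<forall>\<^sub>F t in sequentially. \<delta> \<le> violation (average t) \<longrightarrow> \<delta> \<le> infeasibility (average t) \<longrightarrow>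
    \<bar>infeasibility (average (Suc t)) - infeasibility (average t)\<bar>
      \<le> real n * (2 / \<delta> * subgrad_progress t * K + 4 * real n / \<delta>\<^sup>2 * proj_progress t * R)"
  using eventually_beta_le_subgrad_progress[OF assms(1)] eventually_alpha_le_proj_progress[OF assms(1)]
proof eventually_elim
  case (elim t)
  show ?case
  proof (intro impI)
    assume "\<delta> \<le> violation (average t)" "\<delta> \<le> infeasibility (average t)"
    with elim have "\<beta> t * K + \<alpha> t * R \<le> 2 / \<delta> * subgrad_progress t * K + 4 * real n / \<delta>\<^sup>2 * proj_progress t * R"
      using K_nonneg assms(2) by (intro add_mono mult_right_mono) auto
    then show "\<bar>infeasibility (average (Suc t)) - infeasibility (average t)\<bar>
        \<le> real n * (2 / \<delta> * subgrad_progress t * K + 4 * real n / \<delta>\<^sup>2 * proj_progress t * R)"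
      using infeasibility_average_step_le[OF assms(3)] mult_left_mono[of _ _ "real n"]
      by (meson of_nat_0_le_iff order_trans)
  qed
qed

lemma frequently_violation_plus_infeasibility_less:
  assumes "0 < \<epsilon>"
  shows "\<exists>\<^sub>F t in sequentially. violation (average t) + infeasibility (average t) < \<epsilon>"
proof (rule ccontr)
  define \<delta> where "\<delta> = \<epsilon> / 3"
  have "0 < \<delta>"
    using assms by (simp add: \<delta>_def)
  obtain R where "0 \<le> R" and R: "\<And>t i. i < n \<Longrightarrow> residual t i \<le> R"
    using residual_bounded by blast
  define f where "f t = real n * (2 / \<delta> * subgrad_progress t * K + 4 * real n / \<delta>\<^sup>2 * proj_progress t * R)" for t
  have f_nonneg: "0 \<le> f t" for t
    unfolding f_def using \<open>0 < \<delta>\<close> K_nonneg \<open>0 \<le> R\<close> subgrad_progress_nonneg[of t] proj_progress_nonneg[of t]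
    by simp
  have "summable f"
    unfolding f_def
    by (intro summable_mult summable_mult2 summable_add summable_subgrad_progress summable_proj_progress)
  have variation: "\<forall>\<^sub>F t in sequentially. \<delta> \<le> violation (average t) \<longrightarrow> \<delta> \<le> infeasibility (average t) \<longrightarrow>
      \<bar>infeasibility (average (Suc t)) - infeasibility (average t)\<bar> \<le> f t"
    unfolding f_def by (rule eventually_infeasibility_average_step_le_progress[OF \<open>0 < \<delta>\<close> \<open>0 \<le> R\<close> R])
  have steps: "\<forall>\<^sub>F t in sequentially. \<bar>infeasibility (average (Suc t)) - infeasibility (average t)\<bar> < \<delta> / 4"
    using \<open>0 < \<delta>\<close> by (intro eventually_infeasibility_average_step_less[OF _ R]) simp
  assume "\<not> ?thesis"
  then have "\<forall>\<^sub>F t in sequentially. 3 * \<delta> \<le> violation (average t) + infeasibility (average t)"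
    by (simp add: not_frequently not_less \<delta>_def)
  from no_oscillation_of_summable_variation[OF \<open>0 < \<delta>\<close> this frequently_violation_less[OF \<open>0 < \<delta>\<close>]
      frequently_infeasibility_less[OF \<open>0 < \<delta>\<close>] steps f_nonneg \<open>summable f\<close> variation]
  show False .
qed

lemma continuous_violation_plus_infeasibility: "continuous_on UNIV (\<lambda>v. violation v + infeasibility v)"
  unfolding violation_def infeasibility_def by (intro continuous_intros g_cont) auto

lemma average_limit_point:
  obtains l q where "l \<in> cfp_solutions n g X" "filterlim q sequentially sequentially"
    "(\<lambda>k. average (q k)) \<longlonglongrightarrow> l"
proof -
  obtain l q where q: "filterlim q sequentially sequentially" "(\<lambda>k. average (q k)) \<longlonglongrightarrow> l"
    and "violation l + infeasibility l \<le> 0"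
    using frequently_small_imp_zero_limit_point[OF average_bounded continuous_violation_plus_infeasibility
        frequently_violation_plus_infeasibility_less] by blast
  then have "violation l = 0" "infeasibility l = 0"
    using violation_nonneg[of l] infeasibility_nonneg[of l] by linarith+
  then have "max (g i l) 0 = 0" "infdist l (X i) = 0" if "i < n" for i
    using that unfolding violation_def infeasibility_def
    by (simp_all add: sum_nonneg_eq_0_iff infdist_nonneg)
  then have "g i l \<le> 0" "l \<in> X i" if "i < n" for i
    using that in_closure_iff_infdist_zero[OF X_nonempty] closure_closed[OF X_closed]
    by (metis max.absorb_iff2, metis)
  then have "l \<in> cfp_solutions n g X"
    unfolding cfp_solutions_def by blast
  with q that show ?thesis
    by blast
qed

lemma states_converge:
  obtains l where "l \<in> cfp_solutions n g X" "\<And>i. i < n \<Longrightarrow> (\<lambda>t. x t i) \<longlonglongrightarrow> l"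
proof -
  obtain l q where l: "l \<in> cfp_solutions n g X" and q: "filterlim q sequentially sequentially"
    and lim_q: "(\<lambda>k. average (q k)) \<longlonglongrightarrow> l"
    using average_limit_point by blast
  obtain L where L: "sq_dist_sum l \<longlonglongrightarrow> L"
    using convergent_sq_dist_sum[OF l] convergent_def by blast
  have "(\<lambda>k. x (q k) i - l) \<longlonglongrightarrow> 0" if "i < n" for i
  proof -
    have "(\<lambda>k. x (q k) i - average (q k)) \<longlonglongrightarrow> 0"
      using filterlim_compose[OF state_minus_average_tendsto_zero[OF that] q] by (simp add: o_def)
    from tendsto_add[OF this LIM_zero[OF lim_q]] show ?thesis
      by simp
  qed
  then have "(\<lambda>k. sq_dist_sum l (q k)) \<longlonglongrightarrow> 0"
    unfolding sq_dist_sum_def by (intro tendsto_null_sum) (simp add: tendsto_norm_zero_iff)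
  moreover have "(\<lambda>k. sq_dist_sum l (q k)) \<longlonglongrightarrow> L"
    using filterlim_compose[OF L q] by (simp add: o_def)
  ultimately have "sq_dist_sum l \<longlonglongrightarrow> 0"
    using L LIMSEQ_unique by metis
  have "(\<lambda>t. x t i) \<longlonglongrightarrow> l" if "i < n" for i
  proof -
    have "\<forall>t. norm ((norm (x t i - l))\<^sup>2) \<le> sq_dist_sum l t"
      unfolding sq_dist_sum_def using that by (auto intro: member_le_sum)
    then have "(\<lambda>t. (norm (x t i - l))\<^sup>2) \<longlonglongrightarrow> 0"
      using \<open>sq_dist_sum l \<longlonglongrightarrow> 0\<close> by (rule Lim_null_comparison[OF always_eventually])
    then show ?thesis
      by (simp add: tendsto_norm_zero_iff LIM_zero_iff)
  qed
  with l that show ?thesis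
    by blast
qed

end

theorem corollary3:
  fixes n :: nat
    and a :: "nat \<Rightarrow> nat \<Rightarrow> real"
    and g :: "nat \<Rightarrow> 'a::euclidean_space \<Rightarrow> real"
    and X :: "nat \<Rightarrow> 'a set"
    and dg :: "nat \<Rightarrow> 'a \<Rightarrow> 'a"
    and K h :: real
    and \<alpha> \<beta> :: "nat \<Rightarrow> real"
    and x :: "nat \<Rightarrow> nat \<Rightarrow> 'a"
  assumes n_pos: "n \<ge> 1"
    and a_symm: "\<And>i j. i < n \<Longrightarrow> j < n \<Longrightarrow> a i j = a j i"
    and a_nonneg: "\<And>i j. i < n \<Longrightarrow> j < n \<Longrightarrow> a i j \<ge> 0"
    and conn: "connected_graph n a"
    and g_convex: "\<And>i. i < n \<Longrightarrow> convex_on UNIV (g i)"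
    and g_cont: "\<And>i. i < n \<Longrightarrow> continuous_on UNIV (g i)"
    and X_closed: "\<And>i. i < n \<Longrightarrow> closed (X i)"
    and X_convex: "\<And>i. i < n \<Longrightarrow> convex (X i)"
    and sol_nonempty: "cfp_solutions n g X \<noteq> {}"
    and dg_sel: "\<And>i. i < n \<Longrightarrow> is_plus_subgrad_selection (g i) (dg i)"
    and K_nonneg: "K \<ge> 0"
    and dg_bound: "\<And>i y. i < n \<Longrightarrow> norm (dg i y) \<le> K"
    and alpha_range: "\<And>t. 0 \<le> \<alpha> t \<and> \<alpha> t \<le> 1"
    and alpha_div: "\<not> summable \<alpha>"
    and alpha_sq: "summable (\<lambda>t. (\<alpha> t)\<^sup>2)"
    and beta_nonneg: "\<And>t. \<beta> t \<ge> 0"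
    and beta_div: "\<not> summable \<beta>"
    and beta_sq: "summable (\<lambda>t. (\<beta> t)\<^sup>2)"
    and h_pos: "h > 0"
    and h_bound: "h * Max ((\<lambda>i. \<Sum>j<n. a i j) ` {..<n}) < 1"
    and dyn: "\<And>t i. i < n \<Longrightarrow>
      (let y = x t i + h *\<^sub>R (\<Sum>j<n. a i j *\<^sub>R (x t j - x t i));
           grad = \<beta> t *\<^sub>R dg i y;
           \<xi> = y - grad;
           \<phi> = \<alpha> t *\<^sub>R (\<xi> - closest_point (X i) \<xi>);
           u = h *\<^sub>R (\<Sum>j<n. a i j *\<^sub>R (x t j - x t i)) - grad - \<phi>
       in x (Suc t) i = x t i + u)"
  shows "(\<forall>i<n. \<forall>j<n. (\<lambda>t. norm (x t i - x t j)) \<longlonglongrightarrow> 0) \<and>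
         (\<exists>xs \<in> cfp_solutions n g X. \<forall>i<n. (\<lambda>t. x t i) \<longlonglongrightarrow> xs)"
proof -
  interpret cfp_iteration n a g X dg K h \<alpha> \<beta> x
    by unfold_locales (fact assms)+
  have "\<forall>i<n. \<forall>j<n. (\<lambda>t. norm (x t i - x t j)) \<longlonglongrightarrow> 0"
    using consensus by (simp add: tendsto_norm_zero_iff)
  moreover obtain l where "l \<in> cfp_solutions n g X" "\<And>i. i < n \<Longrightarrow> (\<lambda>t. x t i) \<longlonglongrightarrow> l"
    using states_converge by blast
  ultimately show ?thesis
    by blast
qed

end
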